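(* Let $\mathcal{F}=(W,R)$ be a frame. Then: (1) $\mathcal{F}\models_{\mathsf{B}^{\Box}}\Box J_2\varphi\to J_2\varphi$ (for all formulas $\varphi$) iff $R$ is reflexive; (2) $\mathcal{F}\models_{\mathsf{B}^{\Box}}\Box J_2\varphi\to\Box\Box J_2\varphi$ iff $R$ is transitive; (3) $\mathcal{F}\models_{\mathsf{B}^{\Box}}\Diamond J_2\varphi\to\Box\Diamond J_2\varphi$ iff $R$ is Euclidean.
   Context: Formulas are built from a countably infinite set of propositional variables and the constants $0,1$ using the unary connectives $\neg$, $J_2$, $\Box$ and the binary connective $\vee$; $\varphi\to\psi:=\neg\varphi\vee\psi$ and $\Diamond\varphi:=\neg\Box\neg\varphi$. Let $\mathbf{WK}^e$ be the algebra on $\{0,\tfrac12,1\}$ with $\neg0=1$, $\neg1=0$, $\neg\tfrac12=\tfrac12$; $a\vee b=\tfrac12$ if $a=\tfrac12$ or $b=\tfrac12$, otherwise $a\vee b=\max(a,b)$; $J_2(1)=1$, $J_2(\tfrac12)=J_2(0)=0$. A frame is a pair $(W,R)$ with $W\neq\emptyset$ and $R\subseteq W\times W$. A Bochvar-Kripke model on $(W,R)$ is $(W,R,v)$ with $v:W\times\mathrm{Fm}\to\{0,\tfrac12,1\}$ such that each $v(w,\cdot)$ commutes with $\neg,\vee,J_2,0,1$ as computed in $\mathbf{WK}^e$, and: $v(w,\Box\varphi)=\tfrac12$ iff $v(w,\varphi)=\tfrac12$; $v(w,\Box\varphi)=1$ iff $v(w,\varphi)\neq\tfrac12$ and $v(s,\varphi)=1$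 for all $s$ with $wRs$; $v(w,\Box\varphi)=0$ iff $v(w,\varphi)\neq\tfrac12$ and $v(s,\varphi)\neq1$ for some $s$ with $wRs$. $\mathcal{F}\models_{\mathsf{B}^{\Box}}\varphi$ means: for every Bochvar-Kripke model $(W,R,v)$ on $\mathcal{F}$ and every $w\in W$, $v(w,\varphi)=1$. $R$ is Euclidean if $wRs$ and $wRt$ imply $sRt$. *)

theory Defs
  imports Main
begin

datatype fm = Var nat | Bot | Top | Neg fm | J2 fm | Box fm | Disj fm fm

definition Imp :: "fm \<Rightarrow> fm \<Rightarrow> fm" where "Imp a b = Disj (Neg a) b"
definition Dia :: "fm \<Rightarrow> fm" where "Dia a = Neg (Box (Neg a))"

datatype wk = T0 | Th | T1  (* 0, 1/2, 1 *)

fun wneg :: "wk \<Rightarrow> wk" where "wneg T0 = T1" | "wneg T1 = T0" | "wneg Th = Th"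
fun wor :: "wk \<Rightarrow> wk \<Rightarrow> wk" where
  "wor Th b = Th" | "wor a Th = Th" | "wor T1 b = T1" | "wor T0 b = b"
fun wJ2 :: "wk \<Rightarrow> wk" where "wJ2 T1 = T1" | "wJ2 Th = T0" | "wJ2 T0 = T0"

definition frame :: "'w set \<Rightarrow> ('w \<times> 'w) set \<Rightarrow> bool" where
  "frame W R \<longleftrightarrow> W \<noteq> {} \<and> R \<subseteq> W \<times> W"

definition bk_model :: "'w set \<Rightarrow> ('w \<times> 'w) set \<Rightarrow> ('w \<Rightarrow> fm \<Rightarrow> wk) \<Rightarrow> bool" where
  "bk_model W R v \<longleftrightarrow> (\<forall>w\<in>W.
      v w Bot = T0 \<and> v w Top = T1 \<and>
      (\<forall>a. v w (Neg a) = wneg (v w a)) \<and>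
      (\<forall>a. v w (J2 a) = wJ2 (v w a)) \<and>
      (\<forall>a b. v w (Disj a b) = wor (v w a) (v w b)) \<and>
      (\<forall>a. (v w (Box a) = Th \<longleftrightarrow> v w a = Th)) \<and>
      (\<forall>a. (v w (Box a) = T1 \<longleftrightarrow> v w a \<noteq> Th \<and> (\<forall>s. (w, s) \<in> R \<longrightarrow> v s a = T1))) \<and>
      (\<forall>a. (v w (Box a) = T0 \<longleftrightarrow> v w a \<noteq> Th \<and> (\<exists>s. (w, s) \<in> R \<and> v s a \<noteq> T1))))"

definition frame_valid :: "'w set \<Rightarrow> ('w \<times> 'w) set \<Rightarrow> fm \<Rightarrow> bool" where
  "frame_valid W R \<phi> \<longleftrightarrow> (\<forall>v. bk_model W R v \<longrightarrow> (\<forall>w\<in>W. v w \<phi> = T1))"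

definition euclidean :: "('w \<times> 'w) set \<Rightarrow> bool" where
  "euclidean R \<longleftrightarrow> (\<forall>w s t. (w, s) \<in> R \<and> (w, t) \<in> R \<longrightarrow> (s, t) \<in> R)"

end

theory Submission
  imports Defs
begin

text \<open>
  A formula \<open>J\<^sub>2 \<phi>\<close> never takes the value \<open>1/2\<close>, and \<open>\<box>\<close>, \<open>\<diamond>\<close> and \<open>\<rightarrow>\<close> applied to
  such two-valued formulas are again two-valued and evaluated exactly as in classical Kripke
  semantics, with \<open>J\<^sub>2 \<phi>\<close> true precisely where \<open>\<phi>\<close> is true. Since every set of worlds is the
  truth set of a variable in some model, validity of the three schemata reduces to validity of
  the classical schemata T, 4 and 5 under arbitrary valuations, and the standard correspondence
  arguments apply.
\<close>

definition bivalent :: "'w set \<Rightarrow> ('w \<Rightarrow> fm \<Rightarrow> wk) \<Rightarrow> fm \<Rightarrow> bool" where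
  "bivalent W v a \<longleftrightarrow> (\<forall>w\<in>W. v w a \<noteq> Th)"

lemma frame_succ_in_world_set: "frame W R \<Longrightarrow> (w, s) \<in> R \<Longrightarrow> s \<in> W"
  unfolding frame_def by blast

lemma frame_pred_in_world_set: "frame W R \<Longrightarrow> (w, s) \<in> R \<Longrightarrow> w \<in> W"
  unfolding frame_def by blast

context
  fixes W :: "'w set" and R :: "('w \<times> 'w) set" and v :: "'w \<Rightarrow> fm \<Rightarrow> wk"
  assumes model: "bk_model W R v"
begin

lemma bk_Neg_eq: "w \<in> W \<Longrightarrow> v w (Neg a) = wneg (v w a)"
  using model unfolding bk_model_def by blast

lemma bk_J2_eq: "w \<in> W \<Longrightarrow> v w (J2 a) = wJ2 (v w a)"
  using model unfolding bk_model_def by blast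

lemma bk_Disj_eq: "w \<in> W \<Longrightarrow> v w (Disj a b) = wor (v w a) (v w b)"
  using model unfolding bk_model_def by blast

lemma bk_Imp_eq: "w \<in> W \<Longrightarrow> v w (Imp a b) = wor (wneg (v w a)) (v w b)"
  by (simp add: Imp_def bk_Disj_eq bk_Neg_eq)

lemma bk_Box_eq_Th_iff: "w \<in> W \<Longrightarrow> v w (Box a) = Th \<longleftrightarrow> v w a = Th"
  using model unfolding bk_model_def by blast

lemma bk_Box_eq_T1_iff: "w \<in> W \<Longrightarrow> v w (Box a) = T1 \<longleftrightarrow> v w a \<noteq> Th \<and> (\<forall>s. (w, s) \<in> R \<longrightarrow> v s a = T1)"
  using model unfolding bk_model_def by blast

lemma bk_Box_eq_T0_iff: "w \<in> W \<Longrightarrow> v w (Box a) = T0 \<longleftrightarrow> v w a \<noteq> Th \<and> (\<exists>s. (w, s) \<in> R \<and> v s a \<noteq> T1)"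
  using model unfolding bk_model_def by blast

lemma bk_J2_eq_T1_iff: "w \<in> W \<Longrightarrow> v w (J2 a) = T1 \<longleftrightarrow> v w a = T1"
  by (cases "v w a") (simp_all add: bk_J2_eq)

lemma bk_Imp_eq_T1_iff:
  "w \<in> W \<Longrightarrow> v w (Imp a b) = T1 \<longleftrightarrow> v w a \<noteq> Th \<and> v w b \<noteq> Th \<and> (v w a = T1 \<longrightarrow> v w b = T1)"
  by (cases "v w a"; cases "v w b") (simp_all add: bk_Imp_eq)

lemma bivalent_J2: "bivalent W v (J2 a)"
proof (unfold bivalent_def, intro ballI)
  show "v w (J2 a) \<noteq> Th" if "w \<in> W" for w
    using that by (cases "v w a") (simp_all add: bk_J2_eq)
qed

lemma bivalent_Neg:
  assumes "bivalent W v a"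
  shows "bivalent W v (Neg a)"
proof (unfold bivalent_def, intro ballI)
  show "v w (Neg a) \<noteq> Th" if "w \<in> W" for w
    using assms that by (cases "v w a") (simp_all add: bk_Neg_eq bivalent_def)
qed

lemma bivalent_Box: "bivalent W v a \<Longrightarrow> bivalent W v (Box a)"
  unfolding bivalent_def using bk_Box_eq_Th_iff by blast

lemma bivalent_Dia: "bivalent W v a \<Longrightarrow> bivalent W v (Dia a)"
  unfolding Dia_def by (intro bivalent_Neg bivalent_Box)

lemma bk_Box_eq_T1_iff_bivalent:
  "bivalent W v a \<Longrightarrow> w \<in> W \<Longrightarrow> v w (Box a) = T1 \<longleftrightarrow> (\<forall>s. (w, s) \<in> R \<longrightarrow> v s a = T1)"
  unfolding bivalent_def using bk_Box_eq_T1_iff by blast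

lemma bk_Dia_eq_T1_iff_bivalent:
  assumes "frame W R" "bivalent W v a" "w \<in> W"
  shows "v w (Dia a) = T1 \<longleftrightarrow> (\<exists>s. (w, s) \<in> R \<and> v s a = T1)"
proof -
  have "v s (Neg a) \<noteq> T1 \<longleftrightarrow> v s a = T1" if "s \<in> W" for s
    using assms(2) that unfolding bivalent_def by (cases "v s a") (simp_all add: bk_Neg_eq)
  then have "v w (Box (Neg a)) = T0 \<longleftrightarrow> (\<exists>s. (w, s) \<in> R \<and> v s a = T1)"
    using bk_Box_eq_T0_iff bivalent_Neg assms frame_succ_in_world_set unfolding bivalent_def
    by metis
  then show ?thesis
    unfolding Dia_def using assms(3) by (cases "v w (Box (Neg a))") (simp_all add: bk_Neg_eq)
qed

end

lemma frame_valid_Imp_iff_bivalent: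
  assumes "\<And>v. bk_model W R v \<Longrightarrow> bivalent W v a \<and> bivalent W v b"
  shows "frame_valid W R (Imp a b) \<longleftrightarrow>
    (\<forall>v. bk_model W R v \<longrightarrow> (\<forall>w\<in>W. v w a = T1 \<longrightarrow> v w b = T1))"
  using assms bk_Imp_eq_T1_iff unfolding frame_valid_def bivalent_def by metis

primrec canonical_eval :: "('w \<Rightarrow> nat \<Rightarrow> wk) \<Rightarrow> ('w \<times> 'w) set \<Rightarrow> fm \<Rightarrow> 'w \<Rightarrow> wk" where
  "canonical_eval V R (Var n) = (\<lambda>w. V w n)"
| "canonical_eval V R Bot = (\<lambda>w. T0)"
| "canonical_eval V R Top = (\<lambda>w. T1)"
| "canonical_eval V R (Neg a) = (\<lambda>w. wneg (canonical_eval V R a w))"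
| "canonical_eval V R (J2 a) = (\<lambda>w. wJ2 (canonical_eval V R a w))"
| "canonical_eval V R (Disj a b) = (\<lambda>w. wor (canonical_eval V R a w) (canonical_eval V R b w))"
| "canonical_eval V R (Box a) = (\<lambda>w. if canonical_eval V R a w = Th then Th
      else if \<forall>s. (w, s) \<in> R \<longrightarrow> canonical_eval V R a s = T1 then T1 else T0)"

lemma bk_model_canonical_eval: "bk_model W R (\<lambda>w a. canonical_eval V R a w)"
  unfolding bk_model_def by auto

lemma bk_model_with_truth_set:
  obtains v where "bk_model W R v" and "\<And>w. v w (Var 0) = T1 \<longleftrightarrow> P w"
proof
  let ?V = "\<lambda>w (n::nat). if P w then T1 else T0"
  show "bk_model W R (\<lambda>w a. canonical_eval ?V R a w)"
    by (rule bk_model_canonical_eval)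
  show "canonical_eval ?V R (Var 0) w = T1 \<longleftrightarrow> P w" for w
    by simp
qed

lemmas bivalent_intros = bivalent_J2 bivalent_Box bivalent_Dia

lemma frame_valid_T_iff_refl_on:
  assumes frame: "frame W R"
  shows "(\<forall>\<phi>. frame_valid W R (Imp (Box (J2 \<phi>)) (J2 \<phi>))) \<longleftrightarrow> refl_on W R"
proof -
  have "frame_valid W R (Imp (Box (J2 \<phi>)) (J2 \<phi>)) \<longleftrightarrow>
      (\<forall>v. bk_model W R v \<longrightarrow> (\<forall>w\<in>W. (\<forall>s. (w, s) \<in> R \<longrightarrow> v s \<phi> = T1) \<longrightarrow> v w \<phi> = T1))" for \<phi>
    using frame by (simp add: frame_valid_Imp_iff_bivalent bivalent_intros bk_Box_eq_T1_iff_bivalent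
        bk_J2_eq_T1_iff frame_succ_in_world_set)
  moreover have "(w, w) \<in> R"
    if valid: "\<forall>v. bk_model W R v \<longrightarrow> (\<forall>w\<in>W. (\<forall>s. (w, s) \<in> R \<longrightarrow> v s (Var 0) = T1) \<longrightarrow> v w (Var 0) = T1)"
      and "w \<in> W" for w
  proof -
    obtain v where "bk_model W R v" "\<And>s. v s (Var 0) = T1 \<longleftrightarrow> (w, s) \<in> R"
      using bk_model_with_truth_set[of W R "\<lambda>s. (w, s) \<in> R"] by blast
    with valid \<open>w \<in> W\<close> show ?thesis by blast
  qed
  ultimately show ?thesis
    unfolding refl_on_def by blast
qed

lemma frame_valid_4_iff_trans:
  assumes frame: "frame W R"
  shows "(\<forall>\<phi>. frame_valid W R (Imp (Box (J2 \<phi>)) (Box (Box (J2 \<phi>))))) \<longleftrightarrow> trans R"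
proof -
  have "frame_valid W R (Imp (Box (J2 \<phi>)) (Box (Box (J2 \<phi>)))) \<longleftrightarrow>
      (\<forall>v. bk_model W R v \<longrightarrow> (\<forall>w\<in>W. (\<forall>s. (w, s) \<in> R \<longrightarrow> v s \<phi> = T1) \<longrightarrow>
        (\<forall>s x. (w, s) \<in> R \<longrightarrow> (s, x) \<in> R \<longrightarrow> v x \<phi> = T1)))" for \<phi>
    using frame by (simp add: frame_valid_Imp_iff_bivalent bivalent_intros bk_Box_eq_T1_iff_bivalent
        bk_J2_eq_T1_iff frame_succ_in_world_set)
  moreover have "(w, x) \<in> R"
    if valid: "\<forall>v. bk_model W R v \<longrightarrow> (\<forall>w\<in>W. (\<forall>s. (w, s) \<in> R \<longrightarrow> v s (Var 0) = T1) \<longrightarrow>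
        (\<forall>s x. (w, s) \<in> R \<longrightarrow> (s, x) \<in> R \<longrightarrow> v x (Var 0) = T1))"
      and "(w, s) \<in> R" "(s, x) \<in> R" for w s x
  proof -
    obtain v where model: "bk_model W R v" and truth: "\<And>u. v u (Var 0) = T1 \<longleftrightarrow> (w, u) \<in> R"
      using bk_model_with_truth_set[of W R "\<lambda>u. (w, u) \<in> R"] by blast
    have "w \<in> W" using frame that(2) by (rule frame_pred_in_world_set)
    moreover have "\<forall>u. (w, u) \<in> R \<longrightarrow> v u (Var 0) = T1" using truth by blast
    ultimately have "v x (Var 0) = T1"
      using valid[rule_format, OF model] that(2,3) by blast
    then show ?thesis using truth by blast
  qed
  ultimately show ?thesis
    unfolding trans_def by blast
qed

lemma frame_valid_5_iff_euclidean:
  assumes frame: "frame W R"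
  shows "(\<forall>\<phi>. frame_valid W R (Imp (Dia (J2 \<phi>)) (Box (Dia (J2 \<phi>))))) \<longleftrightarrow> euclidean R"
proof -
  have "frame_valid W R (Imp (Dia (J2 \<phi>)) (Box (Dia (J2 \<phi>)))) \<longleftrightarrow>
      (\<forall>v. bk_model W R v \<longrightarrow> (\<forall>w\<in>W. (\<exists>t. (w, t) \<in> R \<and> v t \<phi> = T1) \<longrightarrow>
        (\<forall>s. (w, s) \<in> R \<longrightarrow> (\<exists>x. (s, x) \<in> R \<and> v x \<phi> = T1))))" for \<phi>
    using frame by (simp add: frame_valid_Imp_iff_bivalent bivalent_intros bk_Box_eq_T1_iff_bivalent
        bk_Dia_eq_T1_iff_bivalent bk_J2_eq_T1_iff frame_succ_in_world_set cong: conj_cong)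
  moreover have "(s, t) \<in> R"
    if valid: "\<forall>v. bk_model W R v \<longrightarrow> (\<forall>w\<in>W. (\<exists>t. (w, t) \<in> R \<and> v t (Var 0) = T1) \<longrightarrow>
        (\<forall>s. (w, s) \<in> R \<longrightarrow> (\<exists>x. (s, x) \<in> R \<and> v x (Var 0) = T1)))"
      and "(w, s) \<in> R" "(w, t) \<in> R" for w s t
  proof -
    obtain v where model: "bk_model W R v" and truth: "\<And>u. v u (Var 0) = T1 \<longleftrightarrow> u = t"
      using bk_model_with_truth_set[of W R "\<lambda>u. u = t"] by blast
    have "w \<in> W" using frame that(2) by (rule frame_pred_in_world_set)
    moreover have "\<exists>u. (w, u) \<in> R \<and> v u (Var 0) = T1" using truth that(3) by blast
    ultimately have "\<exists>x. (s, x) \<in> R \<and> v x (Var 0) = T1"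
      using valid[rule_format, OF model] that(2) by blast
    then show ?thesis by (simp add: truth)
  qed
  ultimately show ?thesis
    unfolding euclidean_def by blast
qed

theorem mainTheorem14:
  fixes W :: "'w set" and R :: "('w \<times> 'w) set"
  assumes "frame W R"
  shows "((\<forall>\<phi>. frame_valid W R (Imp (Box (J2 \<phi>)) (J2 \<phi>))) \<longleftrightarrow> refl_on W R)
       \<and> ((\<forall>\<phi>. frame_valid W R (Imp (Box (J2 \<phi>)) (Box (Box (J2 \<phi>))))) \<longleftrightarrow> trans R)
       \<and> ((\<forall>\<phi>. frame_valid W R (Imp (Dia (J2 \<phi>)) (Box (Dia (J2 \<phi>))))) \<longleftrightarrow> euclidean R)"
  using frame_valid_T_iff_refl_on[OF assms] frame_valid_4_iff_trans[OF assms]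
    frame_valid_5_iff_euclidean[OF assms]
  by blast

end
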